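(* Let $\Phi$ be a Young function, $\varphi\in\mathcal{G}^{\rm dec}_2$ and $p\ge1$, and assume $\Phi(t)\lesssim t^p$ for $t\ge1$ and $r^{-n/p}\lesssim\varphi(r)$ for $r>0$. Suppose that a diffeomorphism $\psi:\mathbb{R}^n\to\mathbb{R}^n$ induces a bounded composition operator $C_\psi$ from $\mathcal{M}_\Phi^\varphi(\mathbb{R}^n)$ to itself. Then there is a constant $C>0$ such that for all $x_0\in\mathbb{R}^n$ and all $f\in\mathcal{M}_\Phi^\varphi(\mathbb{R}^n)$, \[ \|f(D\psi(x_0)\,\cdot)\|_{\mathcal{M}_\Phi^\varphi}\le C\|f\|_{\mathcal{M}_\Phi^\varphi}. \]
   Context: A Young function is a convex $\Phi:[0,\infty)\to[0,\infty)$ with $\Phi(0)=0$, $\lim_{t\to\infty}\Phi(t)=\infty$. $\mathcal{G}^{\rm dec}_2$ is the set of $\varphi:(0,\infty)\to(0,\infty)$ that are almost decreasing (there is $C>0$ with $C\varphi(r)\ge\varphi(s)$ for $r<s$), submultiplicative ($\varphi(rs)\le C\varphi(r)\varphi(s)$), satisfy $\lim_{r\to0}\varphi(r)=\infty$, $\lim_{r\to\infty}\varphi(r)=0$, and $\varphi(1/r)\le C/\varphi(r)$ for some $C>0$. $g\lesssim h$ means $g\le Ch$ for a constant $C>0$. For a ball $B=B(a,r)$: $\|f\|_{\Phi,B}=\inf\{\lambda>0:\frac1{|B|}\int_B\Phi(|f|/\lambda)\le1\}$, $\|f\|_{\mathcal{M}_\Phi^\varphi}=\sup_{a,r}\frac1{\varphi(r)}\|f\|_{\Phi,B(a,r)}$,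 $\mathcal{M}_\Phi^\varphi(\mathbb{R}^n)$ the space of measurable $f$ with finite norm. A diffeomorphism is a bijection $\psi$ with $\psi,\psi^{-1}$ differentiable; $D\psi(x_0)$ is its Jacobi matrix at $x_0$; $C_\psi f=f\circ\psi$. *)

theory Defs
  imports "HOL-Analysis.Analysis"
begin

definition young_function :: "(real \<Rightarrow> real) \<Rightarrow> bool" where
  "young_function \<Phi> \<longleftrightarrow>
     convex_on {0..} \<Phi> \<and> (\<forall>t\<ge>0. \<Phi> t \<ge> 0) \<and> \<Phi> 0 = 0 \<and> filterlim \<Phi> at_top at_top"

definition G_dec_2 :: "(real \<Rightarrow> real) \<Rightarrow> bool" where
  "G_dec_2 \<phi> \<longleftrightarrow>
     (\<forall>r>0. \<phi> r > 0) \<and>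
     (\<exists>C>0. \<forall>r s. 0 < r \<and> r < s \<longrightarrow> \<phi> s \<le> C * \<phi> r) \<and>
     (\<exists>C>0. \<forall>r>0. \<forall>s>0. \<phi> (r * s) \<le> C * \<phi> r * \<phi> s) \<and>
     filterlim \<phi> at_top (at_right 0) \<and>
     (\<phi> \<longlongrightarrow> 0) at_top \<and>
     (\<exists>C>0. \<forall>r>0. \<phi> (1 / r) \<le> C / \<phi> r)"

text \<open>Luxemburg-type average norm on a set B (value in [0,oo]; oo if no lambda works).\<close>
definition orlicz_avg_norm :: "(real \<Rightarrow> real) \<Rightarrow> ('a::euclidean_space \<Rightarrow> real) \<Rightarrow> 'a set \<Rightarrow> ennreal" where
  "orlicz_avg_norm \<Phi> f B =
     Inf {ennreal l | l. l > 0 \<and>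
          (\<integral>\<^sup>+ x\<in>B. ennreal (\<Phi> (\<bar>f x\<bar> / l)) \<partial>lebesgue) / emeasure lebesgue B \<le> 1}"

definition orlicz_morrey_norm :: "(real \<Rightarrow> real) \<Rightarrow> (real \<Rightarrow> real) \<Rightarrow> ('a::euclidean_space \<Rightarrow> real) \<Rightarrow> ennreal" where
  "orlicz_morrey_norm \<Phi> \<phi> f =
     (SUP ar \<in> {(a, r). r > (0::real)}. orlicz_avg_norm \<Phi> f (ball (fst ar) (snd ar)) / ennreal (\<phi> (snd ar)))"

definition orlicz_morrey_space :: "(real \<Rightarrow> real) \<Rightarrow> (real \<Rightarrow> real) \<Rightarrow> ('a::euclidean_space \<Rightarrow> real) set" where
  "orlicz_morrey_space \<Phi> \<phi> = {f. f \<in> borel_measurable lebesgue \<and> orlicz_morrey_norm \<Phi> \<phi> f < \<infinity>}"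

definition diffeomorphism :: "('a::euclidean_space \<Rightarrow> 'a) \<Rightarrow> bool" where
  "diffeomorphism \<psi> \<longleftrightarrow> bij \<psi> \<and> (\<forall>x. \<psi> differentiable (at x)) \<and> (\<forall>x. inv \<psi> differentiable (at x))"

end

theory Submission
  imports Defs
begin

text \<open>
  Fix \<open>x0\<close> and let \<open>A\<close> be the derivative of \<open>\<psi>\<close> at \<open>x0\<close>. For \<open>t > 0\<close> and a shift \<open>h\<close>, the
  function \<open>x \<mapsto> f ((\<psi> (x0 + t x) - \<psi> x0) / t + h)\<close> is obtained from \<open>f\<close> by an affine
  rescaling, composition with \<open>\<psi>\<close> and a second affine rescaling. Submultiplicativity of \<open>\<phi>\<close>
  shows that a dilation by \<open>t\<close> changes the Orlicz--Morrey norm by at most a factor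
  \<open>C \<phi> t\<close>, and \<open>\<phi> t \<phi> (1 / t)\<close> is bounded, so these functions have norm at most a constant
  multiple of that of \<open>f\<close>, uniformly in \<open>t\<close> and \<open>h\<close>. As \<open>t \<rightarrow> 0\<close>, the inner maps converge
  pointwise to \<open>A\<close>.

  Since \<open>f\<close> is merely measurable, the limit is taken after averaging over the shift \<open>h\<close> in a
  small ball: this replaces \<open>f\<close> by a continuous function, to which Fatou's lemma applies.
  The averaging is then removed because \<open>h \<mapsto> \<integral>\<^bsub>B\<^esub> \<Phi> (\<bar>f (A x + h)\<bar> / L) dx\<close> is continuous: shifting
  by \<open>h\<close> only moves the ball \<open>B\<close> by \<open>A\<^sup>-\<^sup>1 h\<close>.
\<close>

declare open_ball[THEN borel_open, measurable]

section \<open>Young functions and Luxemburg norms on balls\<close>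

lemma young_function_nonneg: "young_function \<Phi> \<Longrightarrow> 0 \<le> t \<Longrightarrow> 0 \<le> \<Phi> t"
  by (auto simp: young_function_def)

lemma young_function_mono:
  assumes Y: "young_function \<Phi>" and "0 \<le> s" "s \<le> t"
  shows "\<Phi> s \<le> \<Phi> t"
proof (cases "s = t")
  case False
  with assms have t: "t > 0" by simp
  have cv: "convex_on {0..} \<Phi>" and z: "\<Phi> 0 = 0"
    using Y by (auto simp: young_function_def)
  have "\<Phi> ((1 - s/t) *\<^sub>R 0 + (s/t) *\<^sub>R t) \<le> (1 - s/t) * \<Phi> 0 + (s/t) * \<Phi> t"
    using t assms by (intro convex_onD[OF cv]) auto
  also have "\<dots> = (s/t) * \<Phi> t"
    using z by simp
  also have "\<dots> \<le> \<Phi> t"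
    using t assms young_function_nonneg[OF Y, of t] by (intro mult_left_le_one_le) auto
  finally show ?thesis using t by simp
qed simp

lemma borel_measurable_young_function_comp:
  assumes Y: "young_function \<Phi>" and g: "g \<in> borel_measurable M" and "l \<ge> 0"
  shows "(\<lambda>x. \<Phi> (\<bar>g x\<bar> / l)) \<in> borel_measurable M"
proof -
  have "mono (\<lambda>x. \<Phi> (max 0 x))"
    by (auto simp: mono_def intro!: young_function_mono[OF Y])
  then have "(\<lambda>x. \<Phi> (max 0 x)) \<in> borel_measurable borel"
    by (rule borel_measurable_mono)
  moreover have "(\<lambda>x. \<Phi> (\<bar>g x\<bar> / l)) = (\<lambda>x. \<Phi> (max 0 (\<bar>g x\<bar> / l)))"
    using \<open>l \<ge> 0\<close> by (auto simp: max_def)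
  ultimately show ?thesis
    using g by simp
qed

lemma emeasure_lebesgue_ball_pos:
  fixes a :: "'a::euclidean_space"
  assumes "r > 0"
  shows "0 < emeasure lebesgue (ball a r)" "emeasure lebesgue (ball a r) < \<infinity>"
  using assms by (simp_all add: emeasure_completion emeasure_ball)

lemma orlicz_avg_norm_less_imp_nn_integral_le:
  assumes Y: "young_function \<Phi>" and less: "orlicz_avg_norm \<Phi> g (ball a r) < ennreal L"
    and "L > 0" "r > 0"
  shows "(\<integral>\<^sup>+x\<in>ball a r. ennreal (\<Phi> (\<bar>g x\<bar> / L)) \<partial>lebesgue) \<le> emeasure lebesgue (ball a r)"
proof -
  let ?I = "\<lambda>l. \<integral>\<^sup>+x\<in>ball a r. ennreal (\<Phi> (\<bar>g x\<bar> / l)) \<partial>lebesgue"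
  from less obtain l where l: "0 < l" "l < L" "?I l / emeasure lebesgue (ball a r) \<le> 1"
    unfolding orlicz_avg_norm_def by (auto simp: Inf_less_iff ennreal_less_iff \<open>L > 0\<close>)
  have "?I L \<le> ?I l"
  proof (intro nn_integral_mono mult_right_mono ennreal_leI young_function_mono[OF Y])
    show "\<bar>g x\<bar> / L \<le> \<bar>g x\<bar> / l" for x
      using l by (intro divide_left_mono) auto
  qed (use \<open>L > 0\<close> in auto)
  also have "\<dots> = ?I l / emeasure lebesgue (ball a r) * emeasure lebesgue (ball a r)"
    using emeasure_lebesgue_ball_pos[OF \<open>r > 0\<close>, of a]
    by (simp add: ennreal_divide_times ennreal_divide_self)
  also have "\<dots> \<le> emeasure lebesgue (ball a r)"
    using mult_right_mono[OF l(3), of "emeasure lebesgue (ball a r)"] by simp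
  finally show ?thesis .
qed

lemma orlicz_avg_norm_leI:
  assumes "L0 \<ge> 0" "r > 0"
    and le: "\<And>L. L > L0 \<Longrightarrow>
      (\<integral>\<^sup>+x\<in>ball a r. ennreal (\<Phi> (\<bar>g x\<bar> / L)) \<partial>lebesgue) \<le> emeasure lebesgue (ball a r)"
  shows "orlicz_avg_norm \<Phi> g (ball a r) \<le> ennreal L0"
proof (rule ennreal_le_epsilon)
  fix e :: real assume "0 < e"
  have "(\<integral>\<^sup>+x\<in>ball a r. ennreal (\<Phi> (\<bar>g x\<bar> / (L0 + e))) \<partial>lebesgue) / emeasure lebesgue (ball a r) \<le> 1"
    using le[of "L0 + e"] \<open>0 < e\<close> emeasure_lebesgue_ball_pos[OF \<open>r > 0\<close>, of a]
    by (intro divide_le_posI_ennreal) auto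
  then have "orlicz_avg_norm \<Phi> g (ball a r) \<le> ennreal (L0 + e)"
    unfolding orlicz_avg_norm_def using \<open>L0 \<ge> 0\<close> \<open>0 < e\<close>
    by (intro Inf_lower CollectI exI[of _ "L0 + e"]) simp
  then show "orlicz_avg_norm \<Phi> g (ball a r) \<le> ennreal L0 + ennreal e"
    using \<open>L0 \<ge> 0\<close> \<open>0 < e\<close> by (simp add: ennreal_plus)
qed

lemma orlicz_avg_norm_cong_AE:
  assumes "AE x in lebesgue. g x = g' x"
  shows "orlicz_avg_norm \<Phi> g B = orlicz_avg_norm \<Phi> g' B"
proof -
  have "(\<integral>\<^sup>+ x\<in>B. ennreal (\<Phi> (\<bar>g x\<bar> / l)) \<partial>lebesgue) = (\<integral>\<^sup>+ x\<in>B. ennreal (\<Phi> (\<bar>g' x\<bar> / l)) \<partial>lebesgue)" for l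
    using assms by (intro nn_integral_cong_AE) auto
  then show ?thesis
    unfolding orlicz_avg_norm_def by simp
qed

lemma
  fixes t :: "'a::euclidean_space"
  assumes "c \<noteq> 0"
  shows lebesgue_affine_scaleR:
      "lebesgue = density (distr lebesgue lebesgue (\<lambda>x. t + c *\<^sub>R x)) (\<lambda>_. ennreal (\<bar>c\<bar> ^ DIM('a)))"
    and lebesgue_measurable_affine: "(\<lambda>x. t + c *\<^sub>R x) \<in> lebesgue \<rightarrow>\<^sub>M lebesgue"
proof -
  have T: "(\<lambda>x. t + (\<Sum>j\<in>Basis. (c * (x \<bullet> j)) *\<^sub>R j)) = (\<lambda>x. t + c *\<^sub>R x)"
    unfolding scaleR_scaleR[symmetric] scaleR_sum_right[symmetric] euclidean_representation ..
  show "lebesgue = density (distr lebesgue lebesgue (\<lambda>x. t + c *\<^sub>R x)) (\<lambda>_. ennreal (\<bar>c\<bar> ^ DIM('a)))"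
    using lebesgue_affine_euclidean[where c="\<lambda>_. c" and t=t] assms by (simp add: T prod_constant)
  show "(\<lambda>x. t + c *\<^sub>R x) \<in> lebesgue \<rightarrow>\<^sub>M lebesgue"
    using lebesgue_affine_measurable[where c="\<lambda>_. c" and t=t] assms by (simp add: T)
qed

lemma nn_integral_ball_affine:
  fixes F :: "'a::euclidean_space \<Rightarrow> ennreal"
  assumes F[measurable]: "F \<in> borel_measurable lebesgue" and "c > 0"
  shows "(\<integral>\<^sup>+x\<in>ball (t + c *\<^sub>R b) (c * s). F x \<partial>lebesgue)
    = ennreal (c ^ DIM('a)) * (\<integral>\<^sup>+x\<in>ball b s. F (t + c *\<^sub>R x) \<partial>lebesgue)"
proof -
  let ?T = "\<lambda>x::'a. t + c *\<^sub>R x"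
  have ball: "indicator (ball (?T b) (c * s)) (?T x) = (indicator (ball b s) x :: ennreal)" for x
  proof -
    have "dist (?T b) (?T x) = c * dist b x"
      using \<open>c > 0\<close> by (simp add: dist_norm scaleR_diff_right[symmetric])
    then show ?thesis
      using \<open>c > 0\<close> by (simp add: indicator_def)
  qed
  have [measurable]: "ball (?T b) (c * s) \<in> sets lebesgue"
    by (simp add: fmeasurableD lmeasurable_ball)
  have "(\<integral>\<^sup>+x\<in>ball (?T b) (c * s). F x \<partial>lebesgue)
      = (\<integral>\<^sup>+x. ennreal (c ^ DIM('a)) * (F x * indicator (ball (?T b) (c * s)) x) \<partial>distr lebesgue lebesgue ?T)"
    using \<open>c > 0\<close> by (subst lebesgue_affine_scaleR[of c t]) (simp_all add: nn_integral_density)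
  also have "\<dots> = ennreal (c ^ DIM('a)) * (\<integral>\<^sup>+x\<in>ball b s. F (?T x) \<partial>lebesgue)"
    using lebesgue_measurable_affine[of c t] \<open>c > 0\<close> by (simp add: nn_integral_distr nn_integral_cmult ball)
  finally show ?thesis .
qed

lemma orlicz_avg_norm_affine:
  fixes g :: "'a::euclidean_space \<Rightarrow> real"
  assumes Y: "young_function \<Phi>" and g: "g \<in> borel_measurable lebesgue" and "c > 0"
  shows "orlicz_avg_norm \<Phi> (\<lambda>x. g (t + c *\<^sub>R x)) (ball b s)
    = orlicz_avg_norm \<Phi> g (ball (t + c *\<^sub>R b) (c * s))"
proof -
  let ?k = "ennreal (c ^ DIM('a))"
  have k: "?k \<noteq> 0" "?k \<noteq> \<infinity>"
    using \<open>c > 0\<close> by simp_all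
  have [measurable]: "ball b s \<in> sets lebesgue"
    by (simp add: fmeasurableD lmeasurable_ball)
  have "emeasure lebesgue (ball (t + c *\<^sub>R b) (c * s)) = ?k * emeasure lebesgue (ball b s)"
    using nn_integral_ball_affine[of "\<lambda>_. 1", OF _ \<open>c > 0\<close>] by simp
  moreover have "(\<integral>\<^sup>+x\<in>ball (t + c *\<^sub>R b) (c * s). ennreal (\<Phi> (\<bar>g x\<bar> / l)) \<partial>lebesgue)
      = ?k * (\<integral>\<^sup>+x\<in>ball b s. ennreal (\<Phi> (\<bar>g (t + c *\<^sub>R x)\<bar> / l)) \<partial>lebesgue)" if "l > 0" for l
    using that \<open>c > 0\<close>
    by (intro nn_integral_ball_affine
        measurable_compose[OF borel_measurable_young_function_comp[OF Y g] measurable_ennreal]) auto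
  ultimately show ?thesis
    unfolding orlicz_avg_norm_def
    by (intro arg_cong[where f=Inf] Collect_cong ex_cong1 conj_cong refl)
      (simp add: mult.commute[of ?k] divide_mult_eq[OF k])
qed

section \<open>Orlicz--Morrey norms under rescaling\<close>

lemma orlicz_avg_norm_le_morrey_norm:
  assumes "r > 0" "\<phi> r > 0"
  shows "orlicz_avg_norm \<Phi> g (ball a r) \<le> ennreal (\<phi> r) * orlicz_morrey_norm \<Phi> \<phi> g"
proof -
  have "orlicz_avg_norm \<Phi> g (ball a r) / ennreal (\<phi> r) \<le> orlicz_morrey_norm \<Phi> \<phi> g"
    unfolding orlicz_morrey_norm_def using assms by (intro SUP_upper2[of "(a, r)"]) auto
  then have "ennreal (\<phi> r) * (orlicz_avg_norm \<Phi> g (ball a r) / ennreal (\<phi> r))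
      \<le> ennreal (\<phi> r) * orlicz_morrey_norm \<Phi> \<phi> g"
    by (rule mult_left_mono) simp
  moreover have "ennreal (\<phi> r) * (orlicz_avg_norm \<Phi> g (ball a r) / ennreal (\<phi> r))
      = orlicz_avg_norm \<Phi> g (ball a r)"
    using assms by (metis ennreal_times_divide mult.commute ennreal_mult_divide_eq ennreal_eq_0_iff
        ennreal_neq_top not_le order_refl)
  ultimately show ?thesis
    by simp
qed

lemma orlicz_morrey_norm_leI:
  assumes "\<And>r. r > 0 \<Longrightarrow> \<phi> r > 0"
    and "\<And>a r. r > 0 \<Longrightarrow> orlicz_avg_norm \<Phi> g (ball a r) \<le> ennreal (\<phi> r) * X"
  shows "orlicz_morrey_norm \<Phi> \<phi> g \<le> X"
  unfolding orlicz_morrey_norm_def using assms by (intro SUP_least divide_le_posI_ennreal) auto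

lemma orlicz_morrey_norm_cong_AE:
  "AE x in lebesgue. g x = g' x \<Longrightarrow> orlicz_morrey_norm \<Phi> \<phi> g = orlicz_morrey_norm \<Phi> \<phi> g'"
  unfolding orlicz_morrey_norm_def by (simp add: orlicz_avg_norm_cong_AE)

lemma submultiplicative_constant_pos:
  fixes \<phi> :: "real \<Rightarrow> real"
  assumes "\<And>r. r > 0 \<Longrightarrow> \<phi> r > 0"
    and "\<And>r s. r > 0 \<Longrightarrow> s > 0 \<Longrightarrow> \<phi> (r * s) \<le> C * \<phi> r * \<phi> s"
  shows "C > 0"
proof -
  have "0 < \<phi> 1" "\<phi> 1 \<le> C * (\<phi> 1 * \<phi> 1)"
    using assms[of 1] by (simp_all add: mult.assoc)
  then have "0 < C * (\<phi> 1 * \<phi> 1)"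
    by linarith
  with \<open>0 < \<phi> 1\<close> show ?thesis
    by (simp add: zero_less_mult_iff)
qed

lemma orlicz_morrey_norm_affine_le:
  fixes g :: "'a::euclidean_space \<Rightarrow> real"
  assumes Y: "young_function \<Phi>" and pos: "\<And>r. r > 0 \<Longrightarrow> \<phi> r > 0"
    and submult: "\<And>r s. r > 0 \<Longrightarrow> s > 0 \<Longrightarrow> \<phi> (r * s) \<le> C * \<phi> r * \<phi> s"
    and g: "g \<in> borel_measurable lebesgue" and "c > 0"
  shows "orlicz_morrey_norm \<Phi> \<phi> (\<lambda>x. g (t + c *\<^sub>R x)) \<le> ennreal (C * \<phi> c) * orlicz_morrey_norm \<Phi> \<phi> g"
proof (rule orlicz_morrey_norm_leI[OF pos])
  fix s :: real and a :: 'a assume "s > 0"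
  have "0 < C * \<phi> c"
    using submultiplicative_constant_pos[OF pos submult] pos \<open>c > 0\<close> by simp
  have "orlicz_avg_norm \<Phi> (\<lambda>x. g (t + c *\<^sub>R x)) (ball a s) = orlicz_avg_norm \<Phi> g (ball (t + c *\<^sub>R a) (c * s))"
    using orlicz_avg_norm_affine[OF Y g \<open>c > 0\<close>] .
  also have "\<dots> \<le> ennreal (\<phi> (c * s)) * orlicz_morrey_norm \<Phi> \<phi> g"
    using \<open>c > 0\<close> \<open>s > 0\<close> pos by (intro orlicz_avg_norm_le_morrey_norm) auto
  also have "\<dots> \<le> ennreal (C * \<phi> c * \<phi> s) * orlicz_morrey_norm \<Phi> \<phi> g"
    using submult[OF \<open>c > 0\<close> \<open>s > 0\<close>] by (intro mult_right_mono ennreal_leI) simp_all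
  also have "\<dots> = ennreal (\<phi> s) * (ennreal (C * \<phi> c) * orlicz_morrey_norm \<Phi> \<phi> g)"
    using \<open>0 < C * \<phi> c\<close> ennreal_mult'[of "C * \<phi> c" "\<phi> s"] by (simp only: mult_ac)
  finally show "orlicz_avg_norm \<Phi> (\<lambda>x. g (t + c *\<^sub>R x)) (ball a s)
    \<le> ennreal (\<phi> s) * (ennreal (C * \<phi> c) * orlicz_morrey_norm \<Phi> \<phi> g)" .
qed

lemma affine_comp_in_orlicz_morrey_space:
  fixes g :: "'a::euclidean_space \<Rightarrow> real"
  assumes Y: "young_function \<Phi>" and pos: "\<And>r. r > 0 \<Longrightarrow> \<phi> r > 0"
    and submult: "\<And>r s. r > 0 \<Longrightarrow> s > 0 \<Longrightarrow> \<phi> (r * s) \<le> C * \<phi> r * \<phi> s"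
    and g: "g \<in> orlicz_morrey_space \<Phi> \<phi>" and "c > 0"
  shows "(\<lambda>x. g (t + c *\<^sub>R x)) \<in> orlicz_morrey_space \<Phi> \<phi>"
proof -
  have meas: "g \<in> borel_measurable lebesgue" and fin: "orlicz_morrey_norm \<Phi> \<phi> g < \<infinity>"
    using g by (auto simp: orlicz_morrey_space_def)
  have "(\<lambda>x. g (t + c *\<^sub>R x)) \<in> borel_measurable lebesgue"
    using measurable_compose[OF lebesgue_measurable_affine meas] \<open>c > 0\<close> by simp
  moreover have "ennreal (C * \<phi> c) * orlicz_morrey_norm \<Phi> \<phi> g < \<infinity>"
    using fin by (simp add: ennreal_mult_less_top)
  then have "orlicz_morrey_norm \<Phi> \<phi> (\<lambda>x. g (t + c *\<^sub>R x)) < \<infinity>"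
    using orlicz_morrey_norm_affine_le[OF Y pos submult meas \<open>c > 0\<close>] by (rule le_less_trans[rotated])
  ultimately show ?thesis
    by (simp add: orlicz_morrey_space_def)
qed

lemma orlicz_morrey_norm_difference_quotient_le:
  fixes \<psi> :: "'a::euclidean_space \<Rightarrow> 'a" and f :: "'a \<Rightarrow> real"
  assumes Y: "young_function \<Phi>" and pos: "\<And>r. r > 0 \<Longrightarrow> \<phi> r > 0"
    and submult: "\<And>r s. r > 0 \<Longrightarrow> s > 0 \<Longrightarrow> \<phi> (r * s) \<le> C1 * \<phi> r * \<phi> s"
    and inverse: "\<And>r. r > 0 \<Longrightarrow> \<phi> (1 / r) \<le> C2 / \<phi> r"
    and comp: "\<And>g. g \<in> orlicz_morrey_space \<Phi> \<phi> \<Longrightarrow>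
      g \<circ> \<psi> \<in> orlicz_morrey_space \<Phi> \<phi> \<and> orlicz_morrey_norm \<Phi> \<phi> (g \<circ> \<psi>) \<le> K * orlicz_morrey_norm \<Phi> \<phi> g"
    and f: "f \<in> orlicz_morrey_space \<Phi> \<phi>" and "t > 0"
  shows "orlicz_morrey_norm \<Phi> \<phi> (\<lambda>x. f ((\<psi> (x0 + t *\<^sub>R x) - \<psi> x0) /\<^sub>R t + h))
    \<le> ennreal (C1 * C1 * C2) * K * orlicz_morrey_norm \<Phi> \<phi> f"
proof -
  define f1 where "f1 y = f ((h - \<psi> x0 /\<^sub>R t) + (1 / t) *\<^sub>R y)" for y
  have "C1 > 0"
    by (rule submultiplicative_constant_pos[OF pos submult])
  have "f1 \<in> orlicz_morrey_space \<Phi> \<phi>"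
    unfolding f1_def using \<open>t > 0\<close> by (intro affine_comp_in_orlicz_morrey_space[OF Y pos submult f]) simp_all
  then have f1\<psi>: "f1 \<circ> \<psi> \<in> orlicz_morrey_space \<Phi> \<phi>"
    and norm_f1\<psi>: "orlicz_morrey_norm \<Phi> \<phi> (f1 \<circ> \<psi>) \<le> K * orlicz_morrey_norm \<Phi> \<phi> f1"
    using comp by auto
  have norm_f1: "orlicz_morrey_norm \<Phi> \<phi> f1 \<le> ennreal (C1 * \<phi> (1 / t)) * orlicz_morrey_norm \<Phi> \<phi> f"
    unfolding f1_def using f \<open>t > 0\<close>
    by (intro orlicz_morrey_norm_affine_le[OF Y pos submult]) (simp_all add: orlicz_morrey_space_def)
  have rescaled: "(\<lambda>x. f ((\<psi> (x0 + t *\<^sub>R x) - \<psi> x0) /\<^sub>R t + h)) = (\<lambda>x. (f1 \<circ> \<psi>) (x0 + t *\<^sub>R x))"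
    by (simp add: f1_def algebra_simps inverse_eq_divide)
  have "orlicz_morrey_norm \<Phi> \<phi> (\<lambda>x. f ((\<psi> (x0 + t *\<^sub>R x) - \<psi> x0) /\<^sub>R t + h))
      \<le> ennreal (C1 * \<phi> t) * orlicz_morrey_norm \<Phi> \<phi> (f1 \<circ> \<psi>)"
    unfolding rescaled using f1\<psi> \<open>t > 0\<close>
    by (intro orlicz_morrey_norm_affine_le[OF Y pos submult]) (simp_all add: orlicz_morrey_space_def comp_def)
  also have "\<dots> \<le> ennreal (C1 * \<phi> t) * (K * (ennreal (C1 * \<phi> (1 / t)) * orlicz_morrey_norm \<Phi> \<phi> f))"
    using order_trans[OF norm_f1\<psi> mult_left_mono[OF norm_f1]] by (intro mult_left_mono) simp_all
  also have "\<dots> = ennreal (C1 * \<phi> t) * ennreal (C1 * \<phi> (1 / t)) * K * orlicz_morrey_norm \<Phi> \<phi> f"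
    by (simp only: mult_ac)
  also have "\<dots> \<le> ennreal (C1 * C1 * C2) * K * orlicz_morrey_norm \<Phi> \<phi> f"
  proof (intro mult_right_mono)
    have "\<phi> t * \<phi> (1 / t) \<le> C2"
      using inverse[OF \<open>t > 0\<close>] pos[OF \<open>t > 0\<close>] by (simp add: le_divide_eq mult.commute)
    then have "C1 * C1 * (\<phi> t * \<phi> (1 / t)) \<le> C1 * C1 * C2"
      using \<open>C1 > 0\<close> by (intro mult_left_mono) simp_all
    then have "(C1 * \<phi> t) * (C1 * \<phi> (1 / t)) \<le> C1 * C1 * C2"
      by (simp only: mult_ac)
    then show "ennreal (C1 * \<phi> t) * ennreal (C1 * \<phi> (1 / t)) \<le> ennreal (C1 * C1 * C2)"
      using \<open>C1 > 0\<close> pos[OF \<open>t > 0\<close>] pos[of "1 / t"] \<open>t > 0\<close>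
      by (subst ennreal_mult[symmetric]) (auto intro: ennreal_leI)
  qed auto
  finally show ?thesis .
qed

section \<open>Averages over balls\<close>

lemma measure_lborel_ball:
  fixes c :: "'a::euclidean_space"
  assumes "e > 0"
  shows "measure lborel (ball c e) > 0" "emeasure lborel (ball c e) = ennreal (measure lborel (ball c e))"
  using assms by (simp_all add: content_ball emeasure_ball)

lemma nn_integral_ball_eq_integral:
  fixes H :: "'a::euclidean_space \<Rightarrow> real"
  assumes [measurable]: "H \<in> borel_measurable borel" and nonneg: "\<And>z. 0 \<le> H z" and bounded: "\<And>z. H z \<le> N"
  shows "(\<integral>\<^sup>+z\<in>ball c r. ennreal (H z) \<partial>lborel) = ennreal (LINT z|lborel. H z * indicator (ball c r) z)"
proof -
  have "integrable lborel (\<lambda>z. H z * indicator (ball c r) z)"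
  proof (rule Bochner_Integration.integrable_bound)
    show "integrable lborel (\<lambda>z. N * indicator (ball c r) z :: real)"
      using emeasure_bounded_finite[of "ball c r"] by (intro integrable_mult_right integrable_real_indicator) auto
    show "AE z in lborel. norm (H z * indicator (ball c r) z) \<le> norm (N * indicator (ball c r) z :: real)"
      using nonneg bounded order_trans[OF nonneg bounded] by (intro AE_I2) (simp add: indicator_def)
  qed measurable
  then show ?thesis
    using nonneg by (subst nn_integral_eq_integral[symmetric]) (auto intro!: nn_integral_cong simp: indicator_def)
qed

lemma tendsto_indicator_ball_center:
  fixes z :: "'a::metric_space"
  assumes "u \<longlonglongrightarrow> c" and "z \<notin> sphere c r"
  shows "(\<lambda>n. indicator (ball (u n) r) z :: real) \<longlonglongrightarrow> indicator (ball c r) z"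
proof -
  have dist: "(\<lambda>n. dist (u n) z) \<longlonglongrightarrow> dist c z"
    using assms(1) by (intro tendsto_dist) auto
  from assms(2) consider "dist c z < r" | "dist c z > r"
    by (force simp: sphere_def)
  then have "eventually (\<lambda>n. indicator (ball (u n) r) z = (indicator (ball c r) z :: real)) sequentially"
  proof cases
    case 1
    show ?thesis
      using order_tendstoD(2)[OF dist 1] by eventually_elim (use 1 in \<open>simp add: indicator_def\<close>)
  next
    case 2
    show ?thesis
      using order_tendstoD(1)[OF dist 2] by eventually_elim (use 2 in \<open>simp add: indicator_def\<close>)
  qed
  then show ?thesis
    by (rule tendsto_eventually)
qed

lemma isCont_integral_ball_center:
  fixes H :: "'a::euclidean_space \<Rightarrow> real"
  assumes [measurable]: "H \<in> borel_measurable borel" and bounded: "\<And>z. \<bar>H z\<bar> \<le> N"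
  shows "isCont (\<lambda>c. LINT z|lborel. H z * indicator (ball c r) z) c0"
proof (rule continuous_at_sequentiallyI)
  fix u assume u: "u \<longlonglongrightarrow> c0"
  then obtain D where D: "\<And>n. dist c0 (u n) \<le> D"
    using convergent_imp_bounded by (fastforce simp: bounded_any_center[of _ c0])
  let ?w = "\<lambda>z. N * indicator (ball c0 (r + D)) z :: real"
  show "(\<lambda>n. LINT z|lborel. H z * indicator (ball (u n) r) z) \<longlonglongrightarrow> (LINT z|lborel. H z * indicator (ball c0 r) z)"
  proof (rule integral_dominated_convergence[where w="?w"])
    show "integrable lborel ?w"
      using emeasure_bounded_finite[of "ball c0 (r + D)"]
      by (intro integrable_mult_right integrable_real_indicator) auto
    show "AE z in lborel. norm (H z * indicator (ball (u n) r) z) \<le> ?w z" for n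
    proof (intro AE_I2)
      fix z
      have "dist c0 z < r + D" if "z \<in> ball (u n) r"
        using that D[of n] dist_triangle[of c0 z "u n"] by (simp add: dist_commute)
      then show "norm (H z * indicator (ball (u n) r) z) \<le> ?w z"
        using bounded[of z] by (auto simp: indicator_def)
    qed
    have "sphere c0 r \<in> null_sets lborel"
      using negligible_sphere[of c0 r]
      by (auto simp: null_sets_completion_iff negligible_iff_null_sets negligible_convex_frontier)
    then show "AE z in lborel. (\<lambda>n. H z * indicator (ball (u n) r) z) \<longlonglongrightarrow> H z * indicator (ball c0 r) z"
      by (rule AE_I') (auto intro: tendsto_mult_left tendsto_indicator_ball_center[OF u])
  qed measurable
qed

lemma nn_integral_lborel_translate:
  fixes F :: "'a::euclidean_space \<Rightarrow> ennreal"
  assumes [measurable]: "F \<in> borel_measurable borel"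
  shows "(\<integral>\<^sup>+z. F z \<partial>lborel) = (\<integral>\<^sup>+h. F (y + h) \<partial>lborel)"
proof -
  have "(\<integral>\<^sup>+z. F z \<partial>lborel) = (\<integral>\<^sup>+z. F z \<partial>distr lborel borel ((+) y))"
    by (simp add: lborel_distr_plus)
  also have "\<dots> = (\<integral>\<^sup>+h. F (y + h) \<partial>lborel)"
    by (subst nn_integral_distr) auto
  finally show ?thesis .
qed

definition ball_average :: "('a::euclidean_space \<Rightarrow> real) \<Rightarrow> real \<Rightarrow> 'a \<Rightarrow> real" where
  "ball_average G e y = (LINT z|lborel. G z * indicator (ball y e) z) / measure lborel (ball (0::'a) e)"

lemma isCont_ball_average:
  fixes G :: "'a::euclidean_space \<Rightarrow> real"
  assumes "G \<in> borel_measurable borel" and "\<And>z. \<bar>G z\<bar> \<le> N"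
  shows "isCont (ball_average G e) y"
  unfolding ball_average_def divide_inverse
  by (intro continuous_intros isCont_integral_ball_center[OF assms])

lemma ennreal_ball_average:
  fixes G :: "'a::euclidean_space \<Rightarrow> real"
  assumes [measurable]: "G \<in> borel_measurable borel"
    and nonneg: "\<And>z. 0 \<le> G z" and bounded: "\<And>z. G z \<le> N" and "e > 0"
  shows "ennreal (ball_average G e y)
    = ennreal (1 / measure lborel (ball (0::'a) e)) * (\<integral>\<^sup>+h\<in>ball 0 e. ennreal (G (y + h)) \<partial>lborel)"
proof -
  have "0 \<le> (LINT z|lborel. G z * indicator (ball y e) z)"
    using nonneg by (intro integral_nonneg_AE AE_I2) (simp add: indicator_def)
  then have "ennreal (ball_average G e y)
      = ennreal (1 / measure lborel (ball (0::'a) e)) * ennreal (LINT z|lborel. G z * indicator (ball y e) z)"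
    unfolding ball_average_def by (simp add: ennreal_mult[symmetric])
  also have "ennreal (LINT z|lborel. G z * indicator (ball y e) z) = (\<integral>\<^sup>+z\<in>ball y e. ennreal (G z) \<partial>lborel)"
    by (rule nn_integral_ball_eq_integral[OF _ nonneg bounded, symmetric]) simp
  also have "\<dots> = (\<integral>\<^sup>+h. ennreal (G (y + h)) * indicator (ball y e) (y + h) \<partial>lborel)"
    by (rule nn_integral_lborel_translate) measurable
  also have "\<dots> = (\<integral>\<^sup>+h\<in>ball 0 e. ennreal (G (y + h)) \<partial>lborel)"
    by (simp add: indicator_def dist_norm)
  finally show ?thesis .
qed

lemma nn_integral_ball_average_comp:
  fixes G :: "'a::euclidean_space \<Rightarrow> real" and \<Theta> :: "'b \<Rightarrow> 'a"
  assumes [measurable]: "G \<in> borel_measurable borel" "\<Theta> \<in> borel_measurable M" "S \<in> sets M"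
    and nonneg: "\<And>z. 0 \<le> G z" and bounded: "\<And>z. G z \<le> N" and "e > 0"
    and M: "sigma_finite_measure M"
  shows "(\<integral>\<^sup>+x\<in>S. ennreal (ball_average G e (\<Theta> x)) \<partial>M)
    = ennreal (1 / measure lborel (ball (0::'a) e)) * (\<integral>\<^sup>+h\<in>ball 0 e. (\<integral>\<^sup>+x\<in>S. ennreal (G (\<Theta> x + h)) \<partial>M) \<partial>lborel)"
proof -
  let ?c = "ennreal (1 / measure lborel (ball (0::'a) e))"
  have "(\<integral>\<^sup>+x\<in>S. ennreal (ball_average G e (\<Theta> x)) \<partial>M)
      = (\<integral>\<^sup>+x. ?c * (\<integral>\<^sup>+h. ennreal (G (\<Theta> x + h)) * indicator (ball 0 e) h * indicator S x \<partial>lborel) \<partial>M)"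
  proof (intro nn_integral_cong)
    fix x
    have "(\<integral>\<^sup>+h\<in>ball 0 e. ennreal (G (\<Theta> x + h)) \<partial>lborel) * indicator S x
        = (\<integral>\<^sup>+h. ennreal (G (\<Theta> x + h)) * indicator (ball 0 e) h * indicator S x \<partial>lborel)"
      by (rule nn_integral_multc[symmetric]) measurable
    then show "ennreal (ball_average G e (\<Theta> x)) * indicator S x
        = ?c * (\<integral>\<^sup>+h. ennreal (G (\<Theta> x + h)) * indicator (ball 0 e) h * indicator S x \<partial>lborel)"
      by (simp add: ennreal_ball_average[OF _ nonneg bounded \<open>e > 0\<close>] mult.assoc)
  qed
  also have "\<dots> = ?c * (\<integral>\<^sup>+h. (\<integral>\<^sup>+x. ennreal (G (\<Theta> x + h)) * indicator (ball 0 e) h * indicator S x \<partial>M) \<partial>lborel)"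
    by (simp add: nn_integral_cmult
        pair_sigma_finite.Fubini'[OF pair_sigma_finite.intro[OF M lborel.sigma_finite_measure_axioms]])
  also have "\<dots> = ?c * (\<integral>\<^sup>+h\<in>ball 0 e. (\<integral>\<^sup>+x\<in>S. ennreal (G (\<Theta> x + h)) \<partial>M) \<partial>lborel)"
  proof (intro arg_cong[where f="(*) ?c"] nn_integral_cong)
    fix h
    have "(\<integral>\<^sup>+x\<in>S. ennreal (G (\<Theta> x + h)) \<partial>M) * indicator (ball 0 e) h
        = (\<integral>\<^sup>+x. ennreal (G (\<Theta> x + h)) * indicator S x * indicator (ball 0 e) h \<partial>M)"
      by (rule nn_integral_multc[symmetric]) measurable
    then show "(\<integral>\<^sup>+x. ennreal (G (\<Theta> x + h)) * indicator (ball 0 e) h * indicator S x \<partial>M)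
        = (\<integral>\<^sup>+x\<in>S. ennreal (G (\<Theta> x + h)) \<partial>M) * indicator (ball 0 e) h"
      by (simp add: mult_ac)
  qed
  finally show ?thesis .
qed

lemma nn_integral_ball_average_comp_le:
  fixes G :: "'a::euclidean_space \<Rightarrow> real" and \<Theta> :: "'b \<Rightarrow> 'a"
  assumes "G \<in> borel_measurable borel" "\<Theta> \<in> borel_measurable M" "S \<in> sets M"
    and "\<And>z. 0 \<le> G z" and "\<And>z. G z \<le> N" and "e > 0" and "sigma_finite_measure M"
    and le: "\<And>h. (\<integral>\<^sup>+x\<in>S. ennreal (G (\<Theta> x + h)) \<partial>M) \<le> W"
  shows "(\<integral>\<^sup>+x\<in>S. ennreal (ball_average G e (\<Theta> x)) \<partial>M) \<le> W"
proof -
  let ?V = "measure lborel (ball (0::'a) e)"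
  have V: "?V > 0" "emeasure lborel (ball (0::'a) e) = ennreal ?V"
    using measure_lborel_ball[OF \<open>e > 0\<close>] by auto
  have "(\<integral>\<^sup>+x\<in>S. ennreal (ball_average G e (\<Theta> x)) \<partial>M)
      \<le> ennreal (1 / ?V) * (\<integral>\<^sup>+h. W * indicator (ball (0::'a) e) h \<partial>lborel)"
    unfolding nn_integral_ball_average_comp[OF assms(1-7)]
    using le by (intro mult_left_mono nn_integral_mono mult_right_mono) auto
  also have "\<dots> = ennreal (1 / ?V) * ennreal ?V * W"
    using V by (simp add: nn_integral_cmult_indicator mult_ac)
  also have "\<dots> = W"
    using V by (simp add: ennreal_mult[symmetric])
  finally show ?thesis .
qed

lemma isCont_le_of_ball_integrals_le:
  fixes g :: "'a::euclidean_space \<Rightarrow> real"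
  assumes "isCont g x" "0 \<le> V"
    and le: "\<And>e. e > 0 \<Longrightarrow> (\<integral>\<^sup>+h\<in>ball x e. ennreal (g h) \<partial>lborel) \<le> ennreal V * emeasure lborel (ball x e)"
  shows "g x \<le> V"
proof (rule ccontr)
  assume "\<not> g x \<le> V"
  define m where "m = (g x + V) / 2"
  have "V < m" "m < g x"
    using \<open>\<not> g x \<le> V\<close> by (auto simp: m_def)
  then have "eventually (\<lambda>h. m < g h) (nhds x)"
    using assms(1) by (simp add: isCont_def order_tendstoD(1) eventually_nhds_conv_at)
  then obtain d where "d > 0" and d: "\<And>h. dist h x < d \<Longrightarrow> m < g h"
    unfolding eventually_nhds_metric by blast
  have "ennreal m * emeasure lborel (ball x d) = (\<integral>\<^sup>+h\<in>ball x d. ennreal m \<partial>lborel)"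
    by (simp add: nn_integral_cmult_indicator)
  also have "\<dots> \<le> (\<integral>\<^sup>+h\<in>ball x d. ennreal (g h) \<partial>lborel)"
    using d by (intro nn_integral_mono) (auto simp: indicator_def dist_commute intro: ennreal_leI less_imp_le)
  also have "\<dots> \<le> ennreal V * emeasure lborel (ball x d)"
    using le[OF \<open>d > 0\<close>] .
  finally have "m * measure lborel (ball x d) \<le> V * measure lborel (ball x d)"
    using measure_lborel_ball[OF \<open>d > 0\<close>, of x] \<open>0 \<le> V\<close> \<open>V < m\<close>
    by (simp add: ennreal_mult[symmetric])
  then show False
    using measure_lborel_ball[OF \<open>d > 0\<close>, of x] \<open>V < m\<close> by simp
qed

section \<open>Passing to the limit along converging maps\<close>

lemma nn_integral_tendsto_le:
  fixes u :: "nat \<Rightarrow> 'a \<Rightarrow> ennreal"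
  assumes "\<And>k. u k \<in> borel_measurable M" and "\<And>x. (\<lambda>k. u k x) \<longlonglongrightarrow> v x"
    and "\<And>k. integral\<^sup>N M (u k) \<le> V"
  shows "integral\<^sup>N M v \<le> V"
proof -
  have "integral\<^sup>N M v = (\<integral>\<^sup>+x. liminf (\<lambda>k. u k x) \<partial>M)"
    using assms(2) by (intro nn_integral_cong) (metis lim_imp_Liminf trivial_limit_sequentially)
  also have "\<dots> \<le> liminf (\<lambda>k. integral\<^sup>N M (u k))"
    using assms(1) by (rule nn_integral_liminf)
  also have "\<dots> \<le> V"
    using assms(3) by (intro Liminf_le) auto
  finally show ?thesis .
qed

lemma nn_integral_ball_average_limit_le:
  fixes G :: "'a::euclidean_space \<Rightarrow> real" and \<Theta> :: "nat \<Rightarrow> 'b \<Rightarrow> 'a" and A :: "'b \<Rightarrow> 'a"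
  assumes G[measurable]: "G \<in> borel_measurable borel"
    and nonneg: "\<And>z. 0 \<le> G z" and bounded: "\<And>z. G z \<le> N"
    and \<Theta>[measurable]: "\<And>k. \<Theta> k \<in> borel_measurable M" and lim: "\<And>x. (\<lambda>k. \<Theta> k x) \<longlonglongrightarrow> A x"
    and [measurable]: "S \<in> sets M" and M: "sigma_finite_measure M" and "e > 0"
    and le: "\<And>k h. (\<integral>\<^sup>+x\<in>S. ennreal (G (\<Theta> k x + h)) \<partial>M) \<le> W"
  shows "(\<integral>\<^sup>+x\<in>S. ennreal (ball_average G e (A x)) \<partial>M) \<le> W"
proof (rule nn_integral_tendsto_le)
  have G_abs: "\<bar>G z\<bar> \<le> N" for z
    using nonneg[of z] bounded[of z] by simp
  have [measurable]: "ball_average G e \<in> borel_measurable borel"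
    using isCont_ball_average[OF G G_abs]
    by (intro borel_measurable_continuous_onI continuous_at_imp_continuous_on) auto
  show "(\<lambda>x. ennreal (ball_average G e (\<Theta> k x)) * indicator S x) \<in> borel_measurable M" for k
    by measurable
  show "(\<integral>\<^sup>+x\<in>S. ennreal (ball_average G e (\<Theta> k x)) \<partial>M) \<le> W" for k
    using nonneg bounded le M \<open>e > 0\<close> by (intro nn_integral_ball_average_comp_le) auto
  show "(\<lambda>k. ennreal (ball_average G e (\<Theta> k x)) * indicator S x)
      \<longlonglongrightarrow> ennreal (ball_average G e (A x)) * indicator S x" for x
    by (intro tendsto_mult_ennreal tendsto_const tendsto_ennrealI
        isCont_tendsto_compose[OF isCont_ball_average[OF G G_abs] lim]) (auto simp: indicator_def)
qed

lemma nn_integral_ball_comp_linear_translate: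
  fixes G :: "'a::euclidean_space \<Rightarrow> real" and A B :: "'a \<Rightarrow> 'a"
  assumes [measurable]: "G \<in> borel_measurable borel"
    and nonneg: "\<And>z. 0 \<le> G z" and bounded: "\<And>z. G z \<le> N"
    and A: "bounded_linear A" and B: "bounded_linear B" and AB: "\<And>h. A (B h) = h"
  shows "(\<integral>\<^sup>+x\<in>ball a r. ennreal (G (A x + h)) \<partial>lborel)
    = ennreal (LINT y|lborel. G (A y) * indicator (ball (a + B h) r) y)"
proof -
  have [measurable]: "A \<in> borel_measurable borel"
    using A by (auto intro: borel_measurable_continuous_onI linear_continuous_on)
  have "ennreal (LINT y|lborel. G (A y) * indicator (ball (a + B h) r) y)
      = (\<integral>\<^sup>+y\<in>ball (a + B h) r. ennreal (G (A y)) \<partial>lborel)"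
    using nonneg bounded by (intro nn_integral_ball_eq_integral[symmetric]) auto
  also have "\<dots> = (\<integral>\<^sup>+x. ennreal (G (A (B h + x))) * indicator (ball (a + B h) r) (B h + x) \<partial>lborel)"
    by (rule nn_integral_lborel_translate) measurable
  also have "\<dots> = (\<integral>\<^sup>+x\<in>ball a r. ennreal (G (A x + h)) \<partial>lborel)"
  proof (intro nn_integral_cong)
    fix x
    have "A (B h + x) = A x + h"
      using AB[of h] linear_add[OF bounded_linear.linear[OF A]] by (simp add: add.commute)
    moreover have "dist (a + B h) (B h + x) = dist a x"
      by (simp add: dist_norm algebra_simps)
    ultimately show "ennreal (G (A (B h + x))) * indicator (ball (a + B h) r) (B h + x)
        = ennreal (G (A x + h)) * indicator (ball a r) x"
      by (simp add: indicator_def)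
  qed
  finally show ?thesis
    by simp
qed

lemma nn_integral_ball_comp_linear_le_bounded:
  fixes G :: "'a::euclidean_space \<Rightarrow> real" and A B :: "'a \<Rightarrow> 'a" and \<Theta> :: "nat \<Rightarrow> 'a \<Rightarrow> 'a"
  assumes G[measurable]: "G \<in> borel_measurable borel"
    and nonneg: "\<And>z. 0 \<le> G z" and bounded: "\<And>z. G z \<le> N"
    and A: "bounded_linear A" and B: "bounded_linear B" and AB: "\<And>h. A (B h) = h"
    and \<Theta>: "\<And>k. \<Theta> k \<in> borel_measurable borel" and lim: "\<And>x. (\<lambda>k. \<Theta> k x) \<longlonglongrightarrow> A x"
    and "0 \<le> V" and le: "\<And>k h. (\<integral>\<^sup>+x\<in>ball a r. ennreal (G (\<Theta> k x + h)) \<partial>lborel) \<le> ennreal V"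
  shows "(\<integral>\<^sup>+x\<in>ball a r. ennreal (G (A x)) \<partial>lborel) \<le> ennreal V"
proof -
  have [measurable]: "A \<in> borel_measurable borel"
    using A by (auto intro: borel_measurable_continuous_onI linear_continuous_on)
  define g where "g h = (LINT y|lborel. G (A y) * indicator (ball (a + B h) r) y)" for h
  have g: "(\<integral>\<^sup>+x\<in>ball a r. ennreal (G (A x + h)) \<partial>lborel) = ennreal (g h)" for h
    unfolding g_def by (rule nn_integral_ball_comp_linear_translate[OF G nonneg bounded A B AB])
  have "isCont g 0"
    unfolding g_def using A B nonneg bounded
    by (intro continuous_intros isCont_o2[OF _ isCont_integral_ball_center, where f="\<lambda>h. a + B h"]
        linear_continuous_at) (auto intro: abs_leI order_trans[OF _ nonneg])
  moreover have "(\<integral>\<^sup>+h\<in>ball 0 e. ennreal (g h) \<partial>lborel) \<le> ennreal V * emeasure lborel (ball (0::'a) e)"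
    if "e > 0" for e
  proof -
    let ?V = "measure lborel (ball (0::'a) e)"
    have V: "?V > 0" "emeasure lborel (ball (0::'a) e) = ennreal ?V"
      using measure_lborel_ball[OF \<open>e > 0\<close>] by auto
    have "(\<integral>\<^sup>+x\<in>ball a r. ennreal (ball_average G e (A x)) \<partial>lborel) \<le> ennreal V"
      using nonneg bounded le \<Theta> lborel.sigma_finite_measure_axioms \<open>e > 0\<close>
      by (intro nn_integral_ball_average_limit_le[OF G _ _ _ lim]) auto
    then have "ennreal (1 / ?V) * (\<integral>\<^sup>+h\<in>ball 0 e. ennreal (g h) \<partial>lborel) \<le> ennreal V"
      using nn_integral_ball_average_comp[OF G _ _ nonneg bounded that lborel.sigma_finite_measure_axioms,
          of A "ball a r"]
      by (simp add: g)
    then have "ennreal ?V * (ennreal (1 / ?V) * (\<integral>\<^sup>+h\<in>ball 0 e. ennreal (g h) \<partial>lborel))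
        \<le> ennreal ?V * ennreal V"
      by (rule mult_left_mono) simp
    then show ?thesis
      using V by (simp add: mult.assoc[symmetric] ennreal_mult[symmetric] mult.commute)
  qed
  ultimately have "g 0 \<le> V"
    by (rule isCont_le_of_ball_integrals_le[OF _ \<open>0 \<le> V\<close>])
  then show ?thesis
    using g[of 0] by (simp add: ennreal_leI)
qed

lemma nn_integral_ball_comp_linear_le:
  fixes G :: "'a::euclidean_space \<Rightarrow> real" and A B :: "'a \<Rightarrow> 'a" and \<Theta> :: "nat \<Rightarrow> 'a \<Rightarrow> 'a"
  assumes G[measurable]: "G \<in> borel_measurable borel" and nonneg: "\<And>z. 0 \<le> G z"
    and A: "bounded_linear A" and B: "bounded_linear B" and AB: "\<And>h. A (B h) = h"
    and \<Theta>[measurable]: "\<And>k. \<Theta> k \<in> borel_measurable borel" and lim: "\<And>x. (\<lambda>k. \<Theta> k x) \<longlonglongrightarrow> A x"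
    and "0 \<le> V" and le: "\<And>k h. (\<integral>\<^sup>+x\<in>ball a r. ennreal (G (\<Theta> k x + h)) \<partial>lborel) \<le> ennreal V"
  shows "(\<integral>\<^sup>+x\<in>ball a r. ennreal (G (A x)) \<partial>lborel) \<le> ennreal V"
proof (rule nn_integral_tendsto_le)
  have [measurable]: "A \<in> borel_measurable borel"
    using A by (auto intro: borel_measurable_continuous_onI linear_continuous_on)
  show "(\<lambda>x. ennreal (min (real n) (G (A x))) * indicator (ball a r) x) \<in> borel_measurable lborel" for n
    by measurable
  show "(\<integral>\<^sup>+x\<in>ball a r. ennreal (min (real n) (G (A x))) \<partial>lborel) \<le> ennreal V" for n
  proof (rule nn_integral_ball_comp_linear_le_bounded[where N="real n", OF _ _ _ A B AB \<Theta> lim \<open>0 \<le> V\<close>])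
    show "(\<integral>\<^sup>+x\<in>ball a r. ennreal (min (real n) (G (\<Theta> k x + h))) \<partial>lborel) \<le> ennreal V" for k h
      using le[of k h]
      by (elim order_trans[rotated], intro nn_integral_mono mult_right_mono) (auto intro: ennreal_leI)
  qed (use nonneg in auto)
  show "(\<lambda>n. ennreal (min (real n) (G (A x))) * indicator (ball a r) x)
      \<longlonglongrightarrow> ennreal (G (A x)) * indicator (ball a r) x" for x
  proof (rule tendsto_eventually)
    obtain n0 :: nat where "G (A x) \<le> n0"
      using real_arch_simple by blast
    then show "eventually (\<lambda>n. ennreal (min (real n) (G (A x))) * indicator (ball a r) x
        = ennreal (G (A x)) * indicator (ball a r) x) sequentially"
      unfolding eventually_sequentially by (intro exI[of _ n0]) auto
  qed
qed

lemma orlicz_avg_norm_comp_linear_le: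
  fixes f :: "'a::euclidean_space \<Rightarrow> real" and A B :: "'a \<Rightarrow> 'a" and \<Theta> :: "nat \<Rightarrow> 'a \<Rightarrow> 'a"
  assumes Y: "young_function \<Phi>" and f[measurable]: "f \<in> borel_measurable borel"
    and A: "bounded_linear A" and B: "bounded_linear B" and AB: "\<And>h. A (B h) = h"
    and \<Theta>[measurable]: "\<And>k. \<Theta> k \<in> borel_measurable borel" and lim: "\<And>x. (\<lambda>k. \<Theta> k x) \<longlonglongrightarrow> A x"
    and "r > 0" "0 \<le> c" and le: "\<And>k h. orlicz_avg_norm \<Phi> (\<lambda>x. f (\<Theta> k x + h)) (ball a r) \<le> ennreal c"
  shows "orlicz_avg_norm \<Phi> (\<lambda>x. f (A x)) (ball a r) \<le> ennreal c"
proof (rule orlicz_avg_norm_leI[OF \<open>0 \<le> c\<close> \<open>r > 0\<close>])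
  fix L assume "L > c"
  define H where "H x = \<Phi> (\<bar>f x\<bar> / L)" for x
  have H_meas[measurable]: "H \<in> borel_measurable borel" and [measurable]: "A \<in> borel_measurable borel"
    using \<open>L > c\<close> \<open>0 \<le> c\<close> A unfolding H_def
    by (auto intro: borel_measurable_young_function_comp[OF Y]
        borel_measurable_continuous_onI linear_continuous_on)
  have ball: "emeasure lebesgue (ball a r) = ennreal (measure lborel (ball a r))"
    using measure_lborel_ball[OF \<open>r > 0\<close>] by (simp add: emeasure_completion)
  have "(\<integral>\<^sup>+x\<in>ball a r. ennreal (H (\<Theta> k x + h)) \<partial>lborel) \<le> ennreal (measure lborel (ball a r))" for k h
  proof -
    have "orlicz_avg_norm \<Phi> (\<lambda>x. f (\<Theta> k x + h)) (ball a r) < ennreal L"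
      using le[of k h] \<open>L > c\<close> \<open>0 \<le> c\<close> by (auto simp: ennreal_less_iff intro: le_less_trans)
    then have "(\<integral>\<^sup>+x\<in>ball a r. ennreal (H (\<Theta> k x + h)) \<partial>lebesgue) \<le> emeasure lebesgue (ball a r)"
      unfolding H_def using \<open>L > c\<close> \<open>0 \<le> c\<close> \<open>r > 0\<close> by (intro orlicz_avg_norm_less_imp_nn_integral_le[OF Y]) auto
    then show ?thesis
      by (simp add: nn_integral_completion ball)
  qed
  then have "(\<integral>\<^sup>+x\<in>ball a r. ennreal (H (A x)) \<partial>lborel) \<le> ennreal (measure lborel (ball a r))"
    using \<open>L > c\<close> \<open>0 \<le> c\<close> young_function_nonneg[OF Y]
    by (intro nn_integral_ball_comp_linear_le[OF H_meas _ A B AB \<Theta> lim]) (auto simp: H_def)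
  then show "(\<integral>\<^sup>+x\<in>ball a r. ennreal (\<Phi> (\<bar>f (A x)\<bar> / L)) \<partial>lebesgue) \<le> emeasure lebesgue (ball a r)"
    by (simp add: nn_integral_completion ball H_def)
qed

lemma orlicz_morrey_norm_comp_linear_le:
  fixes f :: "'a::euclidean_space \<Rightarrow> real" and A B :: "'a \<Rightarrow> 'a" and \<Theta> :: "nat \<Rightarrow> 'a \<Rightarrow> 'a"
  assumes Y: "young_function \<Phi>" and pos: "\<And>r. r > 0 \<Longrightarrow> \<phi> r > 0"
    and f: "f \<in> borel_measurable borel"
    and A: "bounded_linear A" and B: "bounded_linear B" and AB: "\<And>h. A (B h) = h"
    and \<Theta>: "\<And>k. \<Theta> k \<in> borel_measurable borel" and lim: "\<And>x. (\<lambda>k. \<Theta> k x) \<longlonglongrightarrow> A x"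
    and le: "\<And>k h. orlicz_morrey_norm \<Phi> \<phi> (\<lambda>x. f (\<Theta> k x + h)) \<le> M"
  shows "orlicz_morrey_norm \<Phi> \<phi> (\<lambda>x. f (A x)) \<le> M"
proof (cases M)
  case (real m)
  show ?thesis
  proof (rule orlicz_morrey_norm_leI[OF pos])
    fix a and r :: real assume "r > 0"
    have "orlicz_avg_norm \<Phi> (\<lambda>x. f (A x)) (ball a r) \<le> ennreal (\<phi> r * m)"
    proof (rule orlicz_avg_norm_comp_linear_le[OF Y f A B AB \<Theta> lim \<open>r > 0\<close>])
      show "0 \<le> \<phi> r * m"
        using pos[OF \<open>r > 0\<close>] real by simp
      show "orlicz_avg_norm \<Phi> (\<lambda>x. f (\<Theta> k x + h)) (ball a r) \<le> ennreal (\<phi> r * m)" for k h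
        using order_trans[OF orlicz_avg_norm_le_morrey_norm[where \<phi>=\<phi>, OF \<open>r > 0\<close> pos[OF \<open>r > 0\<close>]]
            mult_left_mono[OF le[of k h] zero_le]] pos[OF \<open>r > 0\<close>] real
        by (simp add: ennreal_mult)
    qed
    then show "orlicz_avg_norm \<Phi> (\<lambda>x. f (A x)) (ball a r) \<le> ennreal (\<phi> r) * M"
      using pos[OF \<open>r > 0\<close>] real by (simp add: ennreal_mult)
  qed
qed simp

section \<open>Difference quotients of diffeomorphisms\<close>

lemma difference_quotient_tendsto:
  fixes \<psi> :: "'a::real_normed_vector \<Rightarrow> 'b::real_normed_vector"
  assumes D: "(\<psi> has_derivative D) (at x0)" and t: "t \<longlonglongrightarrow> 0" "\<And>k. t k \<noteq> 0"
  shows "(\<lambda>k. (\<psi> (x0 + t k *\<^sub>R v) - \<psi> x0) /\<^sub>R t k) \<longlonglongrightarrow> D v"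
proof -
  have "((\<lambda>s. \<psi> (x0 + s *\<^sub>R v)) has_derivative (\<lambda>s. D (s *\<^sub>R v))) (at 0)"
    using D by (intro has_derivative_compose[of "\<lambda>s. x0 + s *\<^sub>R v", where g=\<psi>] derivative_eq_intros) auto
  then have "((\<lambda>s. norm (\<psi> (x0 + s *\<^sub>R v) - \<psi> x0 - s *\<^sub>R D v) / norm s) \<longlongrightarrow> 0) (at 0)"
    by (simp add: has_derivative_at linear_simps(5)[OF has_derivative_bounded_linear[OF D]])
  moreover have "filterlim t (at 0) sequentially"
    using t by (simp add: filterlim_at)
  ultimately have "(\<lambda>k. norm (\<psi> (x0 + t k *\<^sub>R v) - \<psi> x0 - t k *\<^sub>R D v) / norm (t k)) \<longlonglongrightarrow> 0"
    by (rule filterlim_compose)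
  moreover have "norm (\<psi> (x0 + t k *\<^sub>R v) - \<psi> x0 - t k *\<^sub>R D v) / norm (t k)
      = norm ((\<psi> (x0 + t k *\<^sub>R v) - \<psi> x0) /\<^sub>R t k - D v)" for k
  proof -
    have "(\<psi> (x0 + t k *\<^sub>R v) - \<psi> x0) /\<^sub>R t k - D v = (\<psi> (x0 + t k *\<^sub>R v) - \<psi> x0 - t k *\<^sub>R D v) /\<^sub>R t k"
      using t(2)[of k] by (simp add: scaleR_diff_right)
    then show ?thesis
      by (simp add: divide_inverse_commute abs_inverse)
  qed
  ultimately show ?thesis
    by (simp add: LIM_zero_cancel tendsto_norm_zero_iff)
qed

lemma diffeomorphism_has_derivative:
  "diffeomorphism \<psi> \<Longrightarrow> (\<psi> has_derivative frechet_derivative \<psi> (at x)) (at x)"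
  by (simp add: diffeomorphism_def frechet_derivative_works)

lemma diffeomorphism_derivative_invertible:
  fixes \<psi> :: "'a::euclidean_space \<Rightarrow> 'a"
  assumes "diffeomorphism \<psi>"
  obtains B where "bounded_linear B"
    "\<And>h. frechet_derivative \<psi> (at x) (B h) = h" "\<And>h. B (frechet_derivative \<psi> (at x) h) = h"
proof -
  let ?A = "frechet_derivative \<psi> (at x)" and ?B = "frechet_derivative (inv \<psi>) (at (\<psi> x))"
  have bij: "bij \<psi>"
    using assms by (simp add: diffeomorphism_def)
  have DA: "(\<psi> has_derivative ?A) (at x)"
    using assms by (rule diffeomorphism_has_derivative)
  have DB: "(inv \<psi> has_derivative ?B) (at (\<psi> x))"
    using assms by (simp add: diffeomorphism_def frechet_derivative_works)
  have "((\<psi> \<circ> inv \<psi>) has_derivative (?A \<circ> ?B)) (at (\<psi> x))"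
    using diff_chain_at[OF DB] DA bij by (simp add: bij_is_inj)
  moreover have "\<psi> \<circ> inv \<psi> = id"
    using bij_is_surj[OF bij] by (rule surj_iff[THEN iffD1])
  ultimately have AB: "?A \<circ> ?B = id"
    using has_derivative_id has_derivative_unique unfolding id_def by metis
  have "((inv \<psi> \<circ> \<psi>) has_derivative (?B \<circ> ?A)) (at x)"
    using diff_chain_at[OF DA DB] .
  moreover have "inv \<psi> \<circ> \<psi> = id"
    using bij_is_inj[OF bij] by (rule inj_iff[THEN iffD1])
  ultimately have BA: "?B \<circ> ?A = id"
    using has_derivative_id has_derivative_unique unfolding id_def by metis
  show ?thesis
    using that has_derivative_bounded_linear[OF DB] AB BA by (metis comp_apply id_apply)
qed

lemma AE_lebesgue_comp_linear:
  fixes A B :: "'a::euclidean_space \<Rightarrow> 'a"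
  assumes "AE x in lebesgue. P x" and "bounded_linear B" and BA: "\<And>x. B (A x) = x"
  shows "AE x in lebesgue. P (A x)"
proof -
  obtain N where N: "{x. \<not> P x} \<subseteq> N" "N \<in> null_sets lebesgue"
    using assms(1) unfolding eventually_ae_filter by auto
  then have "negligible (B ` N)"
    using \<open>bounded_linear B\<close>
    by (intro negligible_differentiable_image_negligible bounded_linear_imp_differentiable_on)
      (auto simp: negligible_iff_null_sets)
  moreover have "{x. \<not> P (A x)} \<subseteq> B ` N"
    using N(1) BA by (auto intro: rev_image_eqI)
  ultimately show ?thesis
    by (auto simp: negligible_iff_null_sets intro: AE_I')
qed

lemma orlicz_morrey_norm_comp_derivative_le:
  fixes \<psi> :: "'a::euclidean_space \<Rightarrow> 'a" and f :: "'a \<Rightarrow> real"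
  assumes Y: "young_function \<Phi>" and pos: "\<And>r. r > 0 \<Longrightarrow> \<phi> r > 0"
    and submult: "\<And>r s. r > 0 \<Longrightarrow> s > 0 \<Longrightarrow> \<phi> (r * s) \<le> C1 * \<phi> r * \<phi> s"
    and inverse: "\<And>r. r > 0 \<Longrightarrow> \<phi> (1 / r) \<le> C2 / \<phi> r"
    and comp: "\<And>g. g \<in> orlicz_morrey_space \<Phi> \<phi> \<Longrightarrow>
      g \<circ> \<psi> \<in> orlicz_morrey_space \<Phi> \<phi> \<and> orlicz_morrey_norm \<Phi> \<phi> (g \<circ> \<psi>) \<le> K * orlicz_morrey_norm \<Phi> \<phi> g"
    and \<psi>: "diffeomorphism \<psi>" and f: "f \<in> orlicz_morrey_space \<Phi> \<phi>"
  shows "orlicz_morrey_norm \<Phi> \<phi> (\<lambda>x. f (frechet_derivative \<psi> (at x0) x))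
    \<le> ennreal (C1 * C1 * C2) * K * orlicz_morrey_norm \<Phi> \<phi> f"
proof -
  let ?A = "frechet_derivative \<psi> (at x0)"
  obtain B where B: "bounded_linear B" "\<And>h. ?A (B h) = h" "\<And>h. B (?A h) = h"
    using diffeomorphism_derivative_invertible[OF \<psi>] by blast
  have DA: "(\<psi> has_derivative ?A) (at x0)"
    using \<psi> by (rule diffeomorphism_has_derivative)
  obtain f' where f'_lborel: "f' \<in> borel_measurable lborel" and "AE x in lborel. f x = f' x"
    using completion_ex_borel_measurable_real[of f lborel] f by (auto simp: orlicz_morrey_space_def)
  then have f'[measurable]: "f' \<in> borel_measurable borel" and ae: "AE x in lebesgue. f x = f' x"
    by (simp_all add: AE_completion)
  then have norm_f': "orlicz_morrey_norm \<Phi> \<phi> f' = orlicz_morrey_norm \<Phi> \<phi> f"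
    by (simp add: orlicz_morrey_norm_cong_AE)
  have "f' \<in> orlicz_morrey_space \<Phi> \<phi>"
    using f f' by (simp add: orlicz_morrey_space_def norm_f' measurable_completion)
  define t where "t k = inverse (real (Suc k))" for k
  have [measurable]: "\<psi> \<in> borel_measurable borel"
    using \<psi> by (intro borel_measurable_continuous_onI continuous_at_imp_continuous_on)
      (auto simp: diffeomorphism_def differentiable_imp_continuous_within)
  have "orlicz_morrey_norm \<Phi> \<phi> (\<lambda>x. f' (?A x)) \<le> ennreal (C1 * C1 * C2) * K * orlicz_morrey_norm \<Phi> \<phi> f'"
  proof (rule orlicz_morrey_norm_comp_linear_le[OF Y pos f' has_derivative_bounded_linear[OF DA] B(1,2)])
    show "(\<lambda>x. (\<psi> (x0 + t k *\<^sub>R x) - \<psi> x0) /\<^sub>R t k) \<in> borel_measurable borel" for k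
      by measurable
    show "(\<lambda>k. (\<psi> (x0 + t k *\<^sub>R x) - \<psi> x0) /\<^sub>R t k) \<longlonglongrightarrow> ?A x" for x
      using DA LIMSEQ_inverse_real_of_nat by (intro difference_quotient_tendsto) (auto simp: t_def)
    show "orlicz_morrey_norm \<Phi> \<phi> (\<lambda>x. f' ((\<psi> (x0 + t k *\<^sub>R x) - \<psi> x0) /\<^sub>R t k + h))
        \<le> ennreal (C1 * C1 * C2) * K * orlicz_morrey_norm \<Phi> \<phi> f'" for k h
      using \<open>f' \<in> orlicz_morrey_space \<Phi> \<phi>\<close>
      by (intro orlicz_morrey_norm_difference_quotient_le[OF Y pos submult inverse comp]) (auto simp: t_def)
  qed
  moreover have "orlicz_morrey_norm \<Phi> \<phi> (\<lambda>x. f (?A x)) = orlicz_morrey_norm \<Phi> \<phi> (\<lambda>x. f' (?A x))"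
    using AE_lebesgue_comp_linear[OF ae B(1,3)] by (rule orlicz_morrey_norm_cong_AE)
  ultimately show ?thesis
    by (simp add: norm_f')
qed

theorem proposition4p2:
  fixes \<Phi> \<phi> :: "real \<Rightarrow> real" and p :: real and \<psi> :: "'a::euclidean_space \<Rightarrow> 'a"
  assumes "young_function \<Phi>"
    and "G_dec_2 \<phi>"
    and "p \<ge> 1"
    and "\<exists>C>0. \<forall>t\<ge>1. \<Phi> t \<le> C * t powr p"
    and "\<exists>C>0. \<forall>r>0. r powr (- real DIM('a) / p) \<le> C * \<phi> r"
    and "diffeomorphism \<psi>"
    and "\<exists>C>0. \<forall>f \<in> orlicz_morrey_space \<Phi> \<phi>.
           f \<circ> \<psi> \<in> orlicz_morrey_space \<Phi> \<phi> \<and>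
           orlicz_morrey_norm \<Phi> \<phi> (f \<circ> \<psi>) \<le> ennreal C * orlicz_morrey_norm \<Phi> \<phi> f"
  shows "\<exists>C>0. \<forall>x0. \<forall>f \<in> orlicz_morrey_space \<Phi> \<phi>.
           orlicz_morrey_norm \<Phi> \<phi> (\<lambda>x. f (frechet_derivative \<psi> (at x0) x))
             \<le> ennreal C * orlicz_morrey_norm \<Phi> \<phi> f"
proof -
  obtain C1 C2 where pos: "\<And>r. r > 0 \<Longrightarrow> \<phi> r > 0" and "C1 > 0" "C2 > 0"
    and submult: "\<And>r s. r > 0 \<Longrightarrow> s > 0 \<Longrightarrow> \<phi> (r * s) \<le> C1 * \<phi> r * \<phi> s"
    and inverse: "\<And>r. r > 0 \<Longrightarrow> \<phi> (1 / r) \<le> C2 / \<phi> r"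
    using \<open>G_dec_2 \<phi>\<close> unfolding G_dec_2_def by metis
  obtain K where "K > 0" and comp: "\<And>g. g \<in> orlicz_morrey_space \<Phi> \<phi> \<Longrightarrow>
      g \<circ> \<psi> \<in> orlicz_morrey_space \<Phi> \<phi> \<and> orlicz_morrey_norm \<Phi> \<phi> (g \<circ> \<psi>) \<le> ennreal K * orlicz_morrey_norm \<Phi> \<phi> g"
    using assms(7) by blast
  have "orlicz_morrey_norm \<Phi> \<phi> (\<lambda>x. f (frechet_derivative \<psi> (at x0) x))
      \<le> ennreal (C1 * C1 * C2 * K) * orlicz_morrey_norm \<Phi> \<phi> f"
    if "f \<in> orlicz_morrey_space \<Phi> \<phi>" for f x0
    using orlicz_morrey_norm_comp_derivative_le[OF assms(1) pos submult inverse comp assms(6) that]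
      \<open>C1 > 0\<close> \<open>C2 > 0\<close> \<open>K > 0\<close>
    by (simp add: ennreal_mult)
  then show ?thesis
    using \<open>C1 > 0\<close> \<open>C2 > 0\<close> \<open>K > 0\<close> by (intro exI[of _ "C1 * C1 * C2 * K"]) auto
qed

end
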